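(* Let $H,U$ be separable complex Hilbert spaces, $T>0$, $A$ the generator of a $C_0$-semigroup $e^{tA}$ on $H$ with $\|e^{tA}\|\le Ce^{\omega t}$, $K\in L^2(0,T;\mathbb R)$, $B\in\mathcal L(U,H)$. Let $\tau\in(0,T)$, $X_0=(\xi_0,\xi)\in H\times L^2(0,\tau;H)$, $u\in L^2(\tau,T;U)$, and let $w(\cdot;\tau,X_0)$ be the corresponding mild solution on $[\tau,T]$. For $\tau_1\in(\tau,T)$ put $X_1=(y_0,y(\cdot))\in H\times L^2(0,\tau_1;H)$ with $y_0=w(\tau_1;\tau,X_0)$, $y=\xi$ on $[0,\tau]$ and $y=w(\cdot;\tau,X_0)$ on $(\tau,\tau_1]$, and let $w(\cdot;\tau_1,X_1)$ be the mild solution starting at time $\tau_1$ from $X_1$ with the same control $u$ restricted to $[\tau_1,T]$. Then $w(t;\tau,X_0)=w(t;\tau_1,X_1)$ for all $t\in(\tau_1,T)$.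
   Context: For initial time $\tau$, datum $X_0=(\xi_0,\xi)$ and control $u$, the mild solution $w(\cdot;\tau,X_0)$ is the function $w\in L^2(\tau,T;H)$ satisfying a.e. on $[\tau,T]$: $w(t)=e^{(t-\tau)A}\xi_0+\int_\tau^te^{(t-s)A}\int_\tau^sK(s-\sigma)w(\sigma)d\sigma ds+\int_\tau^te^{(t-s)A}\int_0^\tau K(s-\sigma)\xi(\sigma)d\sigma ds+\int_\tau^te^{(t-s)A}Bu(s)ds$ (it exists, is unique and continuous); it is the mild solution of $w'=Aw+\int_\tau^tK(t-s)w(s)ds+\int_0^\tau K(t-s)\xi(s)ds+Bu$, $w(\tau)=\xi_0$. *)

theory Defs
  imports "HOL-Analysis.Analysis"
begin

text \<open>The generator A is determined by S and
  only enters the mild-solution formula through S t = e^(tA).\<close>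
definition c0_semigroup :: "(real \<Rightarrow> 'h::real_normed_vector \<Rightarrow> 'h) \<Rightarrow> real \<Rightarrow> real \<Rightarrow> bool" where
  "c0_semigroup S C \<omega> \<longleftrightarrow>
     (\<forall>t\<ge>0. bounded_linear (S t)) \<and>
     S 0 = id \<and>
     (\<forall>t\<ge>0. \<forall>s\<ge>0. S (t + s) = S t \<circ> S s) \<and>
     (\<forall>x. ((\<lambda>t. S t x) \<longlongrightarrow> x) (at_right 0)) \<and>
     (\<forall>t\<ge>0. \<forall>x. norm (S t x) \<le> C * exp (\<omega> * t) * norm x)"

definition L2_on :: "real \<Rightarrow> real \<Rightarrow> (real \<Rightarrow> 'h::{banach, second_countable_topology}) \<Rightarrow> bool" where
  "L2_on a b f \<longleftrightarrow>
     set_borel_measurable lborel {a..b} f \<and>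
     set_integrable lborel {a..b} (\<lambda>t. (norm (f t))\<^sup>2)"

definition mild_solution ::
  "(real \<Rightarrow> 'h::{real_inner, banach, second_countable_topology} \<Rightarrow> 'h) \<Rightarrow> (real \<Rightarrow> real) \<Rightarrow> ('u \<Rightarrow> 'h) \<Rightarrow> real \<Rightarrow>
   real \<Rightarrow> 'h \<Rightarrow> (real \<Rightarrow> 'h) \<Rightarrow> (real \<Rightarrow> 'u) \<Rightarrow> (real \<Rightarrow> 'h) \<Rightarrow> bool" where
  "mild_solution S K B T \<tau> \<xi>0 \<xi> u w \<longleftrightarrow>
     L2_on \<tau> T w \<and> continuous_on {\<tau>..T} w \<and>
     (AE t in lborel. t \<in> {\<tau>..T} \<longrightarrow>
        w t = S (t - \<tau>) \<xi>0
            + (LINT s:{\<tau>..t}|lborel. S (t - s) (LINT \<sigma>:{\<tau>..s}|lborel. K (s - \<sigma>) *\<^sub>R w \<sigma>))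
            + (LINT s:{\<tau>..t}|lborel. S (t - s) (LINT \<sigma>:{0..\<tau>}|lborel. K (s - \<sigma>) *\<^sub>R \<xi> \<sigma>))
            + (LINT s:{\<tau>..t}|lborel. S (t - s) (B (u s))))"

end

theory Submission
  imports Defs
begin

(* By the semigroup law, the restriction of w(.;tau,X0) to [tau1,T] satisfies the Duhamel formula
   started at tau1 from its own value w(tau1;tau,X0); since that formula only holds almost
   everywhere, its value at tau1 is identified through right limits. Splitting the memory
   integrals at tau and tau1 shows that its forcing differs from the forcing of w(.;tau1,X1) exactly
   by the memory term of the difference over [tau1,s]. Hence the difference of the two solutions
   is a continuous solution of the homogeneous Volterra equation d = S * (K * d), and on windows of
   length h with M h |K|_1 <= 1/2 its supremum m satisfies m <= m/2, so it vanishes. *)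

section \<open>Integrals over intervals\<close>

lemma AE_lborel_obtain_in_interval:
  assumes "AE t in lborel. P t" and "a < (b::real)"
  obtains t where "t \<in> {a<..<b}" and "P t"
proof (rule ccontr)
  assume "\<not> thesis"
  then have "\<forall>t. P t \<longrightarrow> t \<notin> {a<..<b}"
    using that by blast
  with assms(1) have "AE t in lborel. t \<notin> {a<..<b}"
    by (auto elim: eventually_mono)
  then have "emeasure lborel {t \<in> space lborel. t \<in> {a<..<b}} = 0"
    by (rule emeasure_eq_0_AE)
  moreover have "{t \<in> space lborel. t \<in> {a<..<b}} = {a<..<b}"
    by auto
  ultimately show False
    using \<open>a < b\<close> by simp
qed

lemma continuous_on_le_if_AE_le:
  fixes f :: "real \<Rightarrow> real"
  assumes f: "continuous_on {a..b} f" and "a < b"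
    and le: "AE t in lborel. t \<in> {a..b} \<longrightarrow> f t \<le> c" and t0: "t0 \<in> {a..b}"
  shows "f t0 \<le> c"
proof (rule ccontr)
  assume "\<not> f t0 \<le> c"
  then have "f t0 - c > 0"
    by simp
  with f t0 obtain d where "d > 0" and d: "\<forall>t\<in>{a..b}. dist t t0 < d \<longrightarrow> dist (f t) (f t0) < f t0 - c"
    unfolding continuous_on_iff by blast
  have "max a (t0 - d) < min b (t0 + d)"
    using \<open>a < b\<close> \<open>d > 0\<close> t0 by auto
  then obtain t where t: "t \<in> {max a (t0 - d)<..<min b (t0 + d)}" and le_c: "t \<in> {a..b} \<longrightarrow> f t \<le> c"
    using AE_lborel_obtain_in_interval[OF le] by blast
  have "t \<in> {a..b}" and "dist t t0 < d"
    using t by (auto simp: dist_real_def)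
  then have "\<bar>f t - f t0\<bar> < f t0 - c"
    using d by (simp add: dist_real_def)
  then show False
    using le_c \<open>t \<in> {a..b}\<close> by linarith
qed

lemma tendsto_at_right_unique_AE:
  fixes f g :: "real \<Rightarrow> 'a::real_normed_vector"
  assumes f: "(f \<longlongrightarrow> l) (at_right c)" and g: "(g \<longlongrightarrow> m) (at_right c)" and "c < b"
    and eq: "AE t in lborel. t \<in> {c<..<b} \<longrightarrow> f t = g t"
  shows "l = m"
proof (rule ccontr)
  assume "l \<noteq> m"
  have "((\<lambda>t. f t - g t) \<longlongrightarrow> l - m) (at_right c)"
    using f g by (rule tendsto_diff)
  then have "\<forall>\<^sub>F t in at_right c. dist (f t - g t) (l - m) < norm (l - m)"
    using \<open>l \<noteq> m\<close> by (intro tendstoD) auto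
  then obtain d where "d > c" and d: "\<And>t. c < t \<Longrightarrow> t < d \<Longrightarrow> dist (f t - g t) (l - m) < norm (l - m)"
    by (auto simp: eventually_at_right_field)
  obtain t where t: "t \<in> {c<..<min b d}" and "t \<in> {c<..<b} \<longrightarrow> f t = g t"
    using AE_lborel_obtain_in_interval[OF eq] \<open>c < b\<close> \<open>d > c\<close> by (metis min_less_iff_conj)
  then show False
    using d[of t] by (simp add: dist_norm norm_minus_commute)
qed

lemma set_integrable_imp_set_borel_measurable:
  fixes f :: "'a \<Rightarrow> 'b::{banach, second_countable_topology}"
  shows "set_integrable M A f \<Longrightarrow> set_borel_measurable M A f"
  unfolding set_integrable_def set_borel_measurable_def by (rule borel_measurable_integrable)

lemma set_integral_Icc_split:
  fixes f :: "real \<Rightarrow> 'a::{banach, second_countable_topology}"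
  assumes f: "set_integrable lborel {a..b} f" and "a \<le> c" "c \<le> b"
  shows "(LINT x:{a..b}|lborel. f x) = (LINT x:{a..c}|lborel. f x) + (LINT x:{c..b}|lborel. f x)"
proof -
  have ae: "AE x in lborel. \<not> (x \<in> {a..c} \<and> x \<in> {c..b})"
    using AE_lborel_singleton[of c] by eventually_elim auto
  have i1: "set_integrable lborel {a..c} f"
    using assms by (intro set_integrable_subset[OF f]) auto
  have i2: "set_integrable lborel {c..b} f"
    using assms by (intro set_integrable_subset[OF f]) auto
  have "(LINT x:{a..c} \<union> {c..b}|lborel. f x) = (LINT x:{a..c}|lborel. f x) + (LINT x:{c..b}|lborel. f x)"
    by (rule set_integral_Un_AE[OF ae _ _ i1 i2]) auto
  moreover have "{a..c} \<union> {c..b} = {a..b}"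
    using assms by auto
  ultimately show ?thesis
    by simp
qed

lemma set_integral_Icc_cong:
  fixes f g :: "real \<Rightarrow> 'a::{banach, second_countable_topology}"
  assumes f: "set_integrable lborel {a..b} f" and g: "set_integrable lborel {a..b} g"
    and eq: "\<And>x. x \<in> {a<..b} \<Longrightarrow> f x = g x"
  shows "(LINT x:{a..b}|lborel. f x) = (LINT x:{a..b}|lborel. g x)"
proof -
  have open_left: "(LINT x:{a..b}|lborel. k x) = (LINT x:{a<..b}|lborel. k x)"
    if "set_integrable lborel {a..b} k" for k :: "real \<Rightarrow> 'a"
  proof (rule set_integral_cong_set)
    show "set_borel_measurable lborel {a..b} k"
      using that by (rule set_integrable_imp_set_borel_measurable)
    show "set_borel_measurable lborel {a<..b} k"
      by (rule set_integrable_imp_set_borel_measurable, rule set_integrable_subset[OF that]) auto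
    show "AE x in lborel. x \<in> {a<..b} \<longleftrightarrow> x \<in> {a..b}"
      using AE_lborel_singleton[of a] by eventually_elim auto
  qed
  show ?thesis
    using open_left[OF f] open_left[OF g] eq by (simp add: set_lebesgue_integral_cong)
qed

lemma set_integral_bounded_linear:
  fixes f :: "'a \<Rightarrow> 'b::{banach, second_countable_topology}"
    and L :: "'b \<Rightarrow> 'c::{banach, second_countable_topology}"
  assumes L: "bounded_linear L" and f: "set_integrable M A f"
  shows "set_integrable M A (\<lambda>x. L (f x))" and "(LINT x:A|M. L (f x)) = L (LINT x:A|M. f x)"
proof -
  have eq: "(\<lambda>x. indicator A x *\<^sub>R L (f x)) = (\<lambda>x. L (indicator A x *\<^sub>R f x))"
    using linear_scale[OF bounded_linear.linear[OF L]] by auto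
  show "set_integrable M A (\<lambda>x. L (f x))"
    using L f unfolding set_integrable_def eq by (rule integrable_bounded_linear)
  show "(LINT x:A|M. L (f x)) = L (LINT x:A|M. f x)"
    using L f unfolding set_lebesgue_integral_def set_integrable_def eq by (rule integral_bounded_linear)
qed

lemma set_integrable_Icc_if_bounded:
  fixes g :: "real \<Rightarrow> 'a::{banach, second_countable_topology}"
  assumes "set_borel_measurable lborel {a..b} g" and "\<And>s. s \<in> {a..b} \<Longrightarrow> norm (g s) \<le> C"
  shows "set_integrable lborel {a..b} g"
proof (rule set_integrable_bound[where f="\<lambda>_. C"])
  show "set_integrable lborel {a..b} (\<lambda>_. C)"
    by (intro borel_integrable_atLeastAtMost' continuous_on_const)
  show "AE x in lborel. x \<in> {a..b} \<longrightarrow> norm (g x) \<le> norm C"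
    using assms(2) by (auto intro!: AE_I2 order_trans[OF _ abs_ge_self])
qed (fact assms(1))

lemma set_integral_mono_set_nonneg:
  fixes g :: "real \<Rightarrow> real"
  assumes "set_integrable lborel A g" "B \<subseteq> A" "B \<in> sets lborel" "\<And>x. x \<in> A \<Longrightarrow> 0 \<le> g x"
  shows "(LINT x:B|lborel. g x) \<le> (LINT x:A|lborel. g x)"
proof -
  have "set_integrable lborel B g"
    using assms set_integrable_subset by blast
  then show ?thesis
    using assms unfolding set_lebesgue_integral_def set_integrable_def
    by (intro integral_mono) (auto simp: indicator_def)
qed

lemma set_integral_Icc_tendsto_0:
  fixes g :: "real \<Rightarrow> real"
  assumes g: "set_integrable lborel {a..b} g" and "a < b"
  shows "((\<lambda>t. LINT s:{a..t}|lborel. g s) \<longlongrightarrow> 0) (at_right a)"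
proof -
  have "continuous_on {a..b} (\<lambda>t. integral {a..t} g)"
    using set_borel_integral_eq_integral(1)[OF g] by (rule indefinite_integral_continuous_1)
  moreover have "a \<in> {a..b}"
    using \<open>a < b\<close> by simp
  ultimately have "((\<lambda>t. integral {a..t} g) \<longlongrightarrow> integral {a..a} g) (at a within {a..b})"
    unfolding continuous_on_def by blast
  then have "((\<lambda>t. integral {a..t} g) \<longlongrightarrow> 0) (at_right a)"
    using \<open>a < b\<close> by (simp add: at_within_Icc_at_right)
  moreover have "\<forall>\<^sub>F t in at_right a. integral {a..t} g = (LINT s:{a..t}|lborel. g s)"
    unfolding eventually_at_right_field
  proof (intro exI[of _ b] conjI allI impI)
    fix t assume "a < t" "t < b"
    then show "integral {a..t} g = (LINT s:{a..t}|lborel. g s)"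
      using set_borel_integral_eq_integral(2)[OF set_integrable_subset[OF g]] by simp
  qed (fact \<open>a < b\<close>)
  ultimately show ?thesis
    by (rule Lim_transform_eventually)
qed

lemma set_integral_le_indicator_bound:
  fixes g :: "real \<Rightarrow> real"
  assumes g: "set_integrable lborel {a..t} g" and "0 \<le> C"
    and le: "\<And>s. s \<in> {a..t} \<Longrightarrow> g s \<le> C * indicator {c..d} s"
  shows "(LINT s:{a..t}|lborel. g s) \<le> C * measure lborel {c..d}"
proof -
  have bump: "integrable lborel (\<lambda>s. C * indicator {c..d} s)"
    by (intro integrable_mult_right integrable_real_indicator) (auto simp: emeasure_lborel_Icc_eq)
  have "set_integrable lborel {a..t} (\<lambda>s. C * indicator {c..d} s)"
    unfolding set_integrable_def by (rule integrable_mult_indicator[OF _ bump]) simp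
  then have "(LINT s:{a..t}|lborel. g s) \<le> (LINT s:{a..t}|lborel. C * indicator {c..d} s)"
    using le by (rule set_integral_mono[OF g])
  also have "\<dots> \<le> (\<integral>s. C * indicator {c..d} s \<partial>lborel)"
    unfolding set_lebesgue_integral_def using \<open>0 \<le> C\<close>
    by (intro integral_mono[OF integrable_mult_indicator[OF _ bump] bump]) (auto simp: indicator_def)
  finally show ?thesis
    by simp
qed

lemma L2_on_imp_set_integrable:
  fixes f :: "real \<Rightarrow> 'a::{banach, second_countable_topology}"
  assumes "L2_on a b f"
  shows "set_integrable lborel {a..b} f"
proof (rule set_integrable_bound[where f="\<lambda>x. 1 + (norm (f x))\<^sup>2"])
  have "set_integrable lborel {a..b} (\<lambda>_. 1::real)"
    by (intro borel_integrable_atLeastAtMost' continuous_on_const)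
  then show "set_integrable lborel {a..b} (\<lambda>x. 1 + (norm (f x))\<^sup>2)"
    using assms unfolding L2_on_def by (intro set_integral_add(1)) auto
  show "set_borel_measurable lborel {a..b} f"
    using assms unfolding L2_on_def by simp
  have "norm (f x) \<le> 1 + (norm (f x))\<^sup>2" for x
  proof -
    have "2 * norm (f x) \<le> 1 + (norm (f x))\<^sup>2"
      using zero_le_power2[of "norm (f x) - 1"] by (simp add: power2_diff)
    then show ?thesis
      using norm_ge_zero[of "f x"] by linarith
  qed
  then show "AE x in lborel. x \<in> {a..b} \<longrightarrow> norm (f x) \<le> norm (1 + (norm (f x))\<^sup>2)"
    by (intro AE_I2) (simp add: order_trans[OF _ abs_ge_self])
qed

lemma continuous_on_imp_L2_on:
  fixes w :: "real \<Rightarrow> 'a::{banach, second_countable_topology}"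
  assumes "continuous_on {a..b} w"
  shows "L2_on a b w"
  unfolding L2_on_def set_borel_measurable_def
  using borel_measurable_continuous_on_indicator[OF _ assms]
  by (auto intro!: borel_integrable_atLeastAtMost' continuous_on_power continuous_on_norm assms)

lemma L2_on_subset:
  fixes f :: "real \<Rightarrow> 'a::{banach, second_countable_topology}"
  assumes "L2_on a b f" and "{c..d} \<subseteq> {a..b}"
  shows "L2_on c d f"
proof -
  have "set_borel_measurable lborel {c..d} f"
    by (rule set_borel_measurable_subset[of _ "{a..b}"]) (use assms in \<open>auto simp: L2_on_def\<close>)
  moreover have "set_integrable lborel {c..d} (\<lambda>x. (norm (f x))\<^sup>2)"
    by (rule set_integrable_subset[of _ "{a..b}"]) (use assms in \<open>auto simp: L2_on_def\<close>)
  ultimately show ?thesis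
    unfolding L2_on_def ..
qed

lemma L2_on_glue:
  fixes f g :: "real \<Rightarrow> 'a::{banach, second_countable_topology}"
  assumes f: "L2_on a c f" and g: "L2_on c b g" and "a \<le> c" "c \<le> b"
  shows "L2_on a b (\<lambda>x. if x \<le> c then f x else g x)"
proof -
  let ?h = "\<lambda>x. if x \<le> c then f x else g x"
  have "set_borel_measurable lborel {a..b} ?h"
  proof -
    have "set_borel_measurable lborel {c<..b} g"
      by (rule set_borel_measurable_subset[of _ "{c..b}"]) (use g in \<open>auto simp: L2_on_def\<close>)
    moreover have "(\<lambda>x. indicator {a..b} x *\<^sub>R ?h x) =
        (\<lambda>x. indicator {a..c} x *\<^sub>R f x + indicator {c<..b} x *\<^sub>R g x)"
      using assms by (auto simp: indicator_def fun_eq_iff)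
    moreover have "(\<lambda>x. indicator {a..c} x *\<^sub>R f x) \<in> borel_measurable lborel"
      using f unfolding L2_on_def set_borel_measurable_def by simp
    ultimately show ?thesis
      unfolding set_borel_measurable_def by (simp add: borel_measurable_add)
  qed
  moreover have "set_integrable lborel {a..b} (\<lambda>x. (norm (?h x))\<^sup>2)"
  proof -
    have "set_integrable lborel {c<..b} (\<lambda>x. (norm (g x))\<^sup>2)"
      by (rule set_integrable_subset[of _ "{c..b}"]) (use g in \<open>auto simp: L2_on_def\<close>)
    moreover have "(\<lambda>x. indicator {a..b} x *\<^sub>R (norm (?h x))\<^sup>2) =
        (\<lambda>x. indicator {a..c} x *\<^sub>R (norm (f x))\<^sup>2 + indicator {c<..b} x *\<^sub>R (norm (g x))\<^sup>2)"
      using assms by (auto simp: indicator_def fun_eq_iff)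
    moreover have "set_integrable lborel {a..c} (\<lambda>x. (norm (f x))\<^sup>2)"
      using f unfolding L2_on_def by simp
    ultimately show ?thesis
      unfolding set_integrable_def by (simp add: Bochner_Integration.integrable_add)
  qed
  ultimately show ?thesis
    unfolding L2_on_def by simp
qed

section \<open>Memory integrals\<close>

lemma set_integral_reflect_le:
  fixes g :: "real \<Rightarrow> real"
  assumes g: "set_integrable lborel {0..T} g" and nonneg: "\<And>r. r \<in> {0..T} \<Longrightarrow> 0 \<le> g r"
    and "0 \<le> s - e" "s - c \<le> T"
  shows "set_integrable lborel {c..e} (\<lambda>\<sigma>. g (s - \<sigma>))"
    and "(LINT \<sigma>:{c..e}|lborel. g (s - \<sigma>)) \<le> (LINT r:{0..T}|lborel. g r)"
proof -
  define G where "G r = indicator {s - e..s - c} r * g r" for r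
  have "set_integrable lborel {s - e..s - c} g"
    using assms by (intro set_integrable_subset[OF g]) auto
  then have G: "integrable lborel G"
    unfolding set_integrable_def G_def by simp
  have eq: "(\<lambda>\<sigma>. indicator {c..e} \<sigma> *\<^sub>R g (s - \<sigma>)) = (\<lambda>\<sigma>. G (s - \<sigma>))"
    by (auto simp: G_def indicator_def fun_eq_iff)
  show "set_integrable lborel {c..e} (\<lambda>\<sigma>. g (s - \<sigma>))"
    unfolding set_integrable_def eq using lborel_integrable_real_affine[OF G, of "-1" s] by simp
  have "(LINT \<sigma>:{c..e}|lborel. g (s - \<sigma>)) = (\<integral>\<sigma>. G (s - \<sigma>) \<partial>lborel)"
    unfolding set_lebesgue_integral_def eq ..
  also have "\<dots> = (\<integral>r. G r \<partial>lborel)"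
    using lborel_integral_real_affine[of "-1" G s] by simp
  also have "\<dots> = (LINT r:{s - e..s - c}|lborel. g r)"
    unfolding set_lebesgue_integral_def G_def by simp
  also have "\<dots> \<le> (LINT r:{0..T}|lborel. g r)"
    using assms by (intro set_integral_mono_set_nonneg[OF g]) auto
  finally show "(LINT \<sigma>:{c..e}|lborel. g (s - \<sigma>)) \<le> (LINT r:{0..T}|lborel. g r)" .
qed

lemma set_borel_measurable_kernel_mult:
  fixes K :: "real \<Rightarrow> real" and w :: "real \<Rightarrow> 'h::{banach, second_countable_topology}"
  assumes K: "L2_on 0 T K" and w: "L2_on a b w"
    and sub: "{c..e} \<subseteq> {a..b}" "0 \<le> s - e" "s - c \<le> T"
  shows "set_borel_measurable lborel {c..e} (\<lambda>\<sigma>. K (s - \<sigma>) *\<^sub>R w \<sigma>)"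
proof -
  have eq: "(\<lambda>\<sigma>. indicator {c..e} \<sigma> *\<^sub>R (K (s - \<sigma>) *\<^sub>R w \<sigma>)) =
     (\<lambda>\<sigma>. indicator {c..e} \<sigma> *\<^sub>R ((indicator {0..T} (s - \<sigma>) *\<^sub>R K (s - \<sigma>)) *\<^sub>R (indicator {a..b} \<sigma> *\<^sub>R w \<sigma>)))"
  proof (rule ext)
    fix \<sigma>
    have "\<sigma> \<in> {a..b}" "s - \<sigma> \<in> {0..T}" if "\<sigma> \<in> {c..e}"
      using that sub by auto
    then show "indicator {c..e} \<sigma> *\<^sub>R (K (s - \<sigma>) *\<^sub>R w \<sigma>) =
        indicator {c..e} \<sigma> *\<^sub>R ((indicator {0..T} (s - \<sigma>) *\<^sub>R K (s - \<sigma>)) *\<^sub>R (indicator {a..b} \<sigma> *\<^sub>R w \<sigma>))"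
      by (cases "\<sigma> \<in> {c..e}") simp_all
  qed
  have Km: "(\<lambda>\<sigma>. indicator {0..T} (s - \<sigma>) *\<^sub>R K (s - \<sigma>)) \<in> borel_measurable lborel"
  proof -
    have "(\<lambda>r. indicator {0..T} r *\<^sub>R K r) \<in> borel_measurable borel"
      using K unfolding L2_on_def set_borel_measurable_def by simp
    then show ?thesis
      by (rule measurable_compose[rotated]) simp
  qed
  have wm: "(\<lambda>\<sigma>. indicator {a..b} \<sigma> *\<^sub>R w \<sigma>) \<in> borel_measurable lborel"
    using w unfolding L2_on_def set_borel_measurable_def by simp
  show ?thesis
    unfolding set_borel_measurable_def eq by (intro borel_measurable_scaleR Km wm borel_measurable_indicator) simp
qed

lemma set_integral_kernel_mult:
  fixes K :: "real \<Rightarrow> real" and w :: "real \<Rightarrow> 'h::{banach, second_countable_topology}"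
  assumes K: "L2_on 0 T K" and w: "L2_on a b w"
    and sub: "{c..e} \<subseteq> {a..b}" "0 \<le> s - e" "s - c \<le> T"
  shows "set_integrable lborel {c..e} (\<lambda>\<sigma>. K (s - \<sigma>) *\<^sub>R w \<sigma>)"
    and "norm (LINT \<sigma>:{c..e}|lborel. K (s - \<sigma>) *\<^sub>R w \<sigma>)
           \<le> (1/2) * ((LINT r:{0..T}|lborel. (K r)\<^sup>2) + (LINT \<sigma>:{a..b}|lborel. (norm (w \<sigma>))\<^sup>2))"
proof -
  have K2: "set_integrable lborel {0..T} (\<lambda>r. (K r)\<^sup>2)"
    using K unfolding L2_on_def by simp
  have w2: "set_integrable lborel {a..b} (\<lambda>\<sigma>. (norm (w \<sigma>))\<^sup>2)"
    using w unfolding L2_on_def by simp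
  have m: "set_borel_measurable lborel {c..e} (\<lambda>\<sigma>. K (s - \<sigma>) *\<^sub>R w \<sigma>)"
    using K w sub by (rule set_borel_measurable_kernel_mult)
  have Ki: "set_integrable lborel {c..e} (\<lambda>\<sigma>. (K (s - \<sigma>))\<^sup>2)"
    and Kb: "(LINT \<sigma>:{c..e}|lborel. (K (s - \<sigma>))\<^sup>2) \<le> (LINT r:{0..T}|lborel. (K r)\<^sup>2)"
    using set_integral_reflect_le[OF K2 _ sub(2,3)] by auto
  have wi: "set_integrable lborel {c..e} (\<lambda>\<sigma>. (norm (w \<sigma>))\<^sup>2)"
    using sub by (intro set_integrable_subset[OF w2]) auto
  have wb: "(LINT \<sigma>:{c..e}|lborel. (norm (w \<sigma>))\<^sup>2) \<le> (LINT \<sigma>:{a..b}|lborel. (norm (w \<sigma>))\<^sup>2)"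
    using sub by (intro set_integral_mono_set_nonneg[OF w2]) auto
  define young where "young \<sigma> = (1/2) * ((K (s - \<sigma>))\<^sup>2 + (norm (w \<sigma>))\<^sup>2)" for \<sigma>
  have young_i: "set_integrable lborel {c..e} young"
    unfolding young_def using set_integral_add(1)[OF Ki wi] by (rule set_integrable_mult_right)
  have young_le: "norm (K (s - \<sigma>) *\<^sub>R w \<sigma>) \<le> young \<sigma>" for \<sigma>
  proof -
    have "0 \<le> (\<bar>K (s - \<sigma>)\<bar> - norm (w \<sigma>))\<^sup>2"
      by simp
    then show ?thesis
      unfolding young_def by (simp add: power2_diff)
  qed
  show i: "set_integrable lborel {c..e} (\<lambda>\<sigma>. K (s - \<sigma>) *\<^sub>R w \<sigma>)"
  proof (rule set_integrable_bound[OF young_i m])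
    show "AE \<sigma> in lborel. \<sigma> \<in> {c..e} \<longrightarrow> norm (K (s - \<sigma>) *\<^sub>R w \<sigma>) \<le> norm (young \<sigma>)"
      using young_le by (intro AE_I2) (metis order_trans abs_ge_self real_norm_def)
  qed
  have "norm (LINT \<sigma>:{c..e}|lborel. K (s - \<sigma>) *\<^sub>R w \<sigma>) \<le> (LINT \<sigma>:{c..e}|lborel. young \<sigma>)"
    using set_integral_norm_bound[OF i] set_integral_mono[OF set_integrable_norm[OF i] young_i young_le]
    by linarith
  also have "\<dots> = (1/2) * ((LINT \<sigma>:{c..e}|lborel. (K (s - \<sigma>))\<^sup>2) + (LINT \<sigma>:{c..e}|lborel. (norm (w \<sigma>))\<^sup>2))"
    unfolding young_def using set_integral_add(2)[OF Ki wi] by simp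
  also have "\<dots> \<le> (1/2) * ((LINT r:{0..T}|lborel. (K r)\<^sup>2) + (LINT \<sigma>:{a..b}|lborel. (norm (w \<sigma>))\<^sup>2))"
    using Kb wb by simp
  finally show "norm (LINT \<sigma>:{c..e}|lborel. K (s - \<sigma>) *\<^sub>R w \<sigma>)
      \<le> (1/2) * ((LINT r:{0..T}|lborel. (K r)\<^sup>2) + (LINT \<sigma>:{a..b}|lborel. (norm (w \<sigma>))\<^sup>2))" .
qed

lemma set_integrable_kernel_integral:
  fixes K :: "real \<Rightarrow> real" and w :: "real \<Rightarrow> 'h::{banach, second_countable_topology}"
  assumes K: "L2_on 0 T K" and w: "L2_on a b w" and "0 \<le> a" "hi \<le> T"
  shows "set_integrable lborel {lo..hi} (\<lambda>s. LINT \<sigma>:{a..min b s}|lborel. K (s - \<sigma>) *\<^sub>R w \<sigma>)"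
proof -
  define Kt where "Kt r = indicator {0..T} r *\<^sub>R K r" for r
  define wt where "wt \<sigma> = indicator {a..b} \<sigma> *\<^sub>R w \<sigma>" for \<sigma>
  have [measurable]: "Kt \<in> borel_measurable borel" "wt \<in> borel_measurable borel"
    using K w unfolding L2_on_def set_borel_measurable_def Kt_def wt_def by simp_all
  define G where "G s = (\<integral>\<sigma>. (if a \<le> \<sigma> \<and> \<sigma> \<le> b \<and> \<sigma> \<le> s then Kt (s - \<sigma>) *\<^sub>R wt \<sigma> else 0) \<partial>lborel)" for s
  have "(\<lambda>(s, \<sigma>). if a \<le> \<sigma> \<and> \<sigma> \<le> b \<and> \<sigma> \<le> s then Kt (s - \<sigma>) *\<^sub>R wt \<sigma> else 0)
      \<in> borel_measurable (lborel \<Otimes>\<^sub>M lborel)"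
    by measurable
  then have "G \<in> borel_measurable lborel"
    unfolding G_def by (rule lborel.borel_measurable_lebesgue_integral)
  moreover have "G s = (LINT \<sigma>:{a..min b s}|lborel. K (s - \<sigma>) *\<^sub>R w \<sigma>)" if "s \<le> T" for s
    unfolding G_def set_lebesgue_integral_def using that \<open>0 \<le> a\<close>
    by (intro Bochner_Integration.integral_cong) (auto simp: Kt_def wt_def indicator_def)
  ultimately have "set_borel_measurable lborel {lo..hi} (\<lambda>s. LINT \<sigma>:{a..min b s}|lborel. K (s - \<sigma>) *\<^sub>R w \<sigma>)"
    unfolding set_borel_measurable_def using \<open>hi \<le> T\<close>
    by (subst measurable_cong[where g="\<lambda>s. indicator {lo..hi} s *\<^sub>R G s"]) (auto simp: indicator_def)
  then show ?thesis
    by (rule set_integrable_Icc_if_bounded)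
      (use assms in \<open>auto intro!: set_integral_kernel_mult(2)[OF K w]\<close>)
qed

lemma norm_kernel_integral_le:
  fixes K :: "real \<Rightarrow> real" and w :: "real \<Rightarrow> 'h::{banach, second_countable_topology}"
  assumes K: "L2_on 0 T K" and w: "L2_on a s w" and "0 \<le> a" "a \<le> s" "s \<le> T"
    and bound: "\<And>\<sigma>. \<sigma> \<in> {a..s} \<Longrightarrow> norm (w \<sigma>) \<le> m"
  shows "norm (LINT \<sigma>:{a..s}|lborel. K (s - \<sigma>) *\<^sub>R w \<sigma>) \<le> m * (LINT r:{0..T}|lborel. \<bar>K r\<bar>)"
proof -
  have "norm (w a) \<le> m"
    using bound \<open>a \<le> s\<close> by simp
  then have "0 \<le> m"
    using norm_ge_zero[of "w a"] by linarith
  have i: "set_integrable lborel {a..s} (\<lambda>\<sigma>. K (s - \<sigma>) *\<^sub>R w \<sigma>)"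
    using assms by (intro set_integral_kernel_mult(1)[OF K w]) auto
  have KA: "set_integrable lborel {0..T} (\<lambda>r. \<bar>K r\<bar>)"
    using set_integrable_norm[OF L2_on_imp_set_integrable[OF K]] by simp
  have ka: "set_integrable lborel {a..s} (\<lambda>\<sigma>. \<bar>K (s - \<sigma>)\<bar>)"
    and kb: "(LINT \<sigma>:{a..s}|lborel. \<bar>K (s - \<sigma>)\<bar>) \<le> (LINT r:{0..T}|lborel. \<bar>K r\<bar>)"
    using set_integral_reflect_le[OF KA] assms by auto
  have "norm (LINT \<sigma>:{a..s}|lborel. K (s - \<sigma>) *\<^sub>R w \<sigma>) \<le> (LINT \<sigma>:{a..s}|lborel. norm (K (s - \<sigma>) *\<^sub>R w \<sigma>))"
    by (rule set_integral_norm_bound[OF i])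
  also have "\<dots> \<le> (LINT \<sigma>:{a..s}|lborel. m * \<bar>K (s - \<sigma>)\<bar>)"
  proof (rule set_integral_mono[OF set_integrable_norm[OF i] set_integrable_mult_right[OF ka]])
    fix \<sigma> assume "\<sigma> \<in> {a..s}"
    then have "norm (w \<sigma>) * \<bar>K (s - \<sigma>)\<bar> \<le> m * \<bar>K (s - \<sigma>)\<bar>"
      using bound by (simp add: mult_right_mono)
    then show "norm (K (s - \<sigma>) *\<^sub>R w \<sigma>) \<le> m * \<bar>K (s - \<sigma>)\<bar>"
      by (simp add: mult.commute)
  qed
  also have "\<dots> \<le> m * (LINT r:{0..T}|lborel. \<bar>K r\<bar>)"
    using kb \<open>0 \<le> m\<close> by (simp add: mult_left_mono)
  finally show ?thesis .
qed

section \<open>Uniformly bounded strongly continuous semigroups\<close>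

locale bounded_semigroup =
  fixes S :: "real \<Rightarrow> 'h::{banach, second_countable_topology} \<Rightarrow> 'h" and T M :: real
  assumes bounded_linear_S: "0 \<le> r \<Longrightarrow> bounded_linear (S r)"
    and S_semigroup: "0 \<le> r \<Longrightarrow> 0 \<le> s \<Longrightarrow> S (r + s) x = S r (S s x)"
    and S_tendsto_at_right_0: "((\<lambda>r. S r x) \<longlongrightarrow> x) (at_right 0)"
    and norm_S_le: "0 \<le> r \<Longrightarrow> r \<le> T \<Longrightarrow> norm (S r x) \<le> M * norm x"
    and M_nonneg: "0 \<le> M"
    and T_nonneg: "0 \<le> T"

lemma bounded_semigroup_if_c0_semigroup:
  assumes S: "c0_semigroup S C \<omega>" and "0 \<le> T"
  shows "bounded_semigroup S T (\<bar>C\<bar> * exp (\<bar>\<omega>\<bar> * T))"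
proof (rule bounded_semigroup.intro)
  show "norm (S r x) \<le> \<bar>C\<bar> * exp (\<bar>\<omega>\<bar> * T) * norm x" if "0 \<le> r" "r \<le> T" for r x
  proof -
    have "\<omega> * r \<le> \<bar>\<omega>\<bar> * T"
      using that by (metis abs_ge_self abs_ge_zero mult_mono order_trans)
    then have "C * exp (\<omega> * r) \<le> \<bar>C\<bar> * exp (\<bar>\<omega>\<bar> * T)"
      by (intro mult_mono) auto
    then have "C * exp (\<omega> * r) * norm x \<le> \<bar>C\<bar> * exp (\<bar>\<omega>\<bar> * T) * norm x"
      by (rule mult_right_mono) simp
    then show ?thesis
      using S that unfolding c0_semigroup_def by (metis order_trans)
  qed
qed (use S \<open>0 \<le> T\<close> in \<open>auto simp: c0_semigroup_def\<close>)

definition duhamel_integral :: "(real \<Rightarrow> 'h \<Rightarrow> 'h) \<Rightarrow> real \<Rightarrow> real \<Rightarrow> (real \<Rightarrow> 'h) \<Rightarrow> 'h::{banach, second_countable_topology}"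
  where "duhamel_integral S a t f = (LINT s:{a..t}|lborel. S (t - s) (f s))"

context bounded_semigroup
begin

lemma S_add: "0 \<le> r \<Longrightarrow> S r (x + y) = S r x + S r y"
  and S_diff: "0 \<le> r \<Longrightarrow> S r (x - y) = S r x - S r y"
  and S_zero: "0 \<le> r \<Longrightarrow> S r 0 = 0"
  using bounded_linear_S[THEN bounded_linear.linear] by (simp_all add: linear_add linear_diff linear_0)

lemma continuous_on_S: "continuous_on {0..T} (\<lambda>r. S r x)"
  unfolding continuous_on_def
proof (intro ballI)
  fix r0 assume r0: "r0 \<in> {0..T}"
  let ?F = "at r0 within {0..T}"
  have le: "norm (S r x - S r0 x) \<le> M * norm (S \<bar>r - r0\<bar> x - x)" if r: "r \<in> {0..T}" for r
  proof (cases "r0 \<le> r")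
    case True
    then have "S r x - S r0 x = S r0 (S (r - r0) x - x)"
      using S_semigroup[of r0 "r - r0"] r0 by (simp add: S_diff)
    then show ?thesis
      using True r0 norm_S_le[of r0] by simp
  next
    case False
    then have "S r x - S r0 x = - S r (S (r0 - r) x - x)"
      using S_semigroup[of r "r0 - r"] r by (simp add: S_diff)
    then show ?thesis
      using False r norm_S_le[of r] by simp
  qed
  have "((\<lambda>r. \<bar>r - r0\<bar>) \<longlongrightarrow> \<bar>r0 - r0\<bar>) ?F"
    by (intro tendsto_intros)
  moreover have "\<forall>\<^sub>F r in ?F. \<bar>r - r0\<bar> \<in> {0<..} \<and> \<bar>r - r0\<bar> \<noteq> 0"
    unfolding eventually_at_filter by (intro always_eventually) auto
  ultimately have "filterlim (\<lambda>r. \<bar>r - r0\<bar>) (at_right 0) ?F"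
    unfolding filterlim_at by simp
  then have "((\<lambda>r. S \<bar>r - r0\<bar> x) \<longlongrightarrow> x) ?F"
    by (rule filterlim_compose[OF S_tendsto_at_right_0])
  then have "((\<lambda>r. M * norm (S \<bar>r - r0\<bar> x - x)) \<longlongrightarrow> 0) ?F"
    by (intro tendsto_mult_right_zero tendsto_norm_zero) (simp add: LIM_zero_iff)
  moreover have "\<forall>\<^sub>F r in ?F. norm (S r x - S r0 x) \<le> M * norm (S \<bar>r - r0\<bar> x - x)"
    using le by (auto simp: eventually_at_filter)
  ultimately have "((\<lambda>r. S r x - S r0 x) \<longlongrightarrow> 0) ?F"
    by (rule Lim_null_comparison[rotated])
  then show "((\<lambda>r. S r x) \<longlongrightarrow> S r0 x) ?F"
    by (simp add: LIM_zero_iff)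
qed

lemma continuous_on_S_uncurried: "continuous_on ({0..T} \<times> UNIV) (\<lambda>p. S (fst p) (snd p))"
  unfolding continuous_on_def
proof (intro ballI)
  fix p0 assume p0: "p0 \<in> {0..T} \<times> (UNIV :: 'h set)"
  obtain r0 x0 where p0_eq: "p0 = (r0, x0)" and r0: "r0 \<in> {0..T}"
    using p0 by auto
  let ?F = "at p0 within {0..T} \<times> UNIV"
  have "continuous_on ({0..T} \<times> UNIV) (\<lambda>p. S (fst p) x0)"
    by (rule continuous_on_compose2[OF continuous_on_S continuous_on_fst]) auto
  then have "((\<lambda>p. S (fst p) x0) \<longlongrightarrow> S r0 x0) ?F"
    using p0 unfolding continuous_on_def p0_eq by auto
  then have "((\<lambda>p. M * norm (snd p - x0) + norm (S (fst p) x0 - S r0 x0)) \<longlongrightarrow> 0) ?F"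
    unfolding p0_eq by (intro tendsto_add_zero tendsto_mult_right_zero tendsto_norm_zero)
      (auto simp: LIM_zero_iff intro!: tendsto_eq_intros)
  moreover have "\<forall>\<^sub>F p in ?F. norm (S (fst p) (snd p) - S r0 x0)
      \<le> M * norm (snd p - x0) + norm (S (fst p) x0 - S r0 x0)"
    unfolding eventually_at_filter
  proof (intro always_eventually allI impI)
    fix p :: "real \<times> 'h" assume "p \<in> {0..T} \<times> UNIV"
    then have r: "0 \<le> fst p" "fst p \<le> T"
      by auto
    have "S (fst p) (snd p) - S r0 x0 = S (fst p) (snd p - x0) + (S (fst p) x0 - S r0 x0)"
      using r by (simp add: S_diff)
    also have "norm \<dots> \<le> norm (S (fst p) (snd p - x0)) + norm (S (fst p) x0 - S r0 x0)"
      by (rule norm_triangle_ineq)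
    also have "\<dots> \<le> M * norm (snd p - x0) + norm (S (fst p) x0 - S r0 x0)"
      using norm_S_le[OF r] by simp
    finally show "norm (S (fst p) (snd p) - S r0 x0) \<le> M * norm (snd p - x0) + norm (S (fst p) x0 - S r0 x0)" .
  qed
  ultimately have "((\<lambda>p. S (fst p) (snd p) - S r0 x0) \<longlongrightarrow> 0) ?F"
    by (rule Lim_null_comparison[rotated])
  then show "((\<lambda>p. S (fst p) (snd p)) \<longlongrightarrow> S (fst p0) (snd p0)) ?F"
    by (simp add: LIM_zero_iff p0_eq)
qed

lemma set_borel_measurable_duhamel_integrand:
  assumes f: "set_borel_measurable lborel {a..t} f" and "0 \<le> a" "t \<le> T"
  shows "set_borel_measurable lborel {a..t} (\<lambda>s. S (t - s) (f s))"
proof -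
  \<comment> \<open>\<open>S\<close> is only controlled on \<open>[0, T]\<close>; clamping the time makes it jointly continuous on the whole plane.\<close>
  define clamp where "clamp r = max 0 (min T r)" for r
  have "continuous_on UNIV (\<lambda>p. S (clamp (fst p)) (snd p))"
    by (rule continuous_on_compose2[OF continuous_on_S_uncurried, where f="\<lambda>p. (clamp (fst p), snd p)", simplified])
      (auto simp: clamp_def T_nonneg intro!: continuous_intros)
  then have G: "(\<lambda>p. S (clamp (fst p)) (snd p)) \<in> borel_measurable (borel \<Otimes>\<^sub>M borel)"
    using borel_measurable_continuous_onI by (simp add: borel_prod)
  have "(\<lambda>s. (t - s, indicator {a..t} s *\<^sub>R f s)) \<in> measurable lborel (borel \<Otimes>\<^sub>M borel)"
    using f unfolding set_borel_measurable_def by (intro measurable_Pair) auto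
  from measurable_compose[OF this G]
  have "(\<lambda>s. S (clamp (t - s)) (indicator {a..t} s *\<^sub>R f s)) \<in> borel_measurable lborel"
    by simp
  moreover have "S (clamp (t - s)) (indicator {a..t} s *\<^sub>R f s) = indicator {a..t} s *\<^sub>R S (t - s) (f s)" for s
    using assms by (cases "s \<in> {a..t}") (auto simp: clamp_def S_zero)
  ultimately show ?thesis
    unfolding set_borel_measurable_def by simp
qed


lemma set_integrable_duhamel_integrand:
  assumes f: "set_integrable lborel {a..t} f" and "0 \<le> a" "t \<le> T"
  shows "set_integrable lborel {a..t} (\<lambda>s. S (t - s) (f s))"
proof (rule set_integrable_bound[OF set_integrable_mult_right[OF set_integrable_norm[OF f], of M]])
  show "set_borel_measurable lborel {a..t} (\<lambda>s. S (t - s) (f s))"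
    using assms by (rule set_borel_measurable_duhamel_integrand[OF set_integrable_imp_set_borel_measurable])
  show "AE s in lborel. s \<in> {a..t} \<longrightarrow> norm (S (t - s) (f s)) \<le> norm (M * norm (f s))"
    using assms M_nonneg norm_S_le[of "t - _"] by (intro AE_I2) auto
qed

lemma norm_duhamel_integral_le:
  assumes f: "set_integrable lborel {a..t} f" and "0 \<le> a" "t \<le> T"
  shows "norm (duhamel_integral S a t f) \<le> M * (LINT s:{a..t}|lborel. norm (f s))"
proof -
  have i: "set_integrable lborel {a..t} (\<lambda>s. S (t - s) (f s))"
    using assms by (rule set_integrable_duhamel_integrand)
  have "norm (duhamel_integral S a t f) \<le> (LINT s:{a..t}|lborel. norm (S (t - s) (f s)))"
    unfolding duhamel_integral_def by (rule set_integral_norm_bound[OF i])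
  also have "\<dots> \<le> (LINT s:{a..t}|lborel. M * norm (f s))"
    using assms norm_S_le[of "t - _"]
    by (intro set_integral_mono[OF set_integrable_norm[OF i] set_integrable_mult_right[OF set_integrable_norm[OF f]]]) auto
  finally show ?thesis
    by simp
qed

lemma duhamel_integral_add:
  assumes f: "set_integrable lborel {a..t} f" and g: "set_integrable lborel {a..t} g" and "0 \<le> a" "t \<le> T"
  shows "duhamel_integral S a t (\<lambda>s. f s + g s) = duhamel_integral S a t f + duhamel_integral S a t g"
proof -
  have "duhamel_integral S a t (\<lambda>s. f s + g s) = (LINT s:{a..t}|lborel. S (t - s) (f s) + S (t - s) (g s))"
    unfolding duhamel_integral_def using assms by (intro set_lebesgue_integral_cong) (auto simp: S_add)
  also have "\<dots> = duhamel_integral S a t f + duhamel_integral S a t g"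
    unfolding duhamel_integral_def using assms
    by (intro set_integral_add(2) set_integrable_duhamel_integrand[OF f] set_integrable_duhamel_integrand[OF g])
  finally show ?thesis .
qed

lemma duhamel_integral_diff:
  assumes f: "set_integrable lborel {a..t} f" and g: "set_integrable lborel {a..t} g" and "0 \<le> a" "t \<le> T"
  shows "duhamel_integral S a t (\<lambda>s. f s - g s) = duhamel_integral S a t f - duhamel_integral S a t g"
proof -
  have "duhamel_integral S a t (\<lambda>s. f s - g s) = (LINT s:{a..t}|lborel. S (t - s) (f s) - S (t - s) (g s))"
    unfolding duhamel_integral_def using assms by (intro set_lebesgue_integral_cong) (auto simp: S_diff)
  also have "\<dots> = duhamel_integral S a t f - duhamel_integral S a t g"
    unfolding duhamel_integral_def using assms
    by (intro set_integral_diff(2) set_integrable_duhamel_integrand[OF f] set_integrable_duhamel_integrand[OF g])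
  finally show ?thesis .
qed

lemma duhamel_integral_split:
  assumes h: "set_integrable lborel {a..t} h" and "0 \<le> a" "a \<le> c" "c \<le> t" "t \<le> T"
  shows "duhamel_integral S a t h = S (t - c) (duhamel_integral S a c h) + duhamel_integral S c t h"
proof -
  have "duhamel_integral S a t h = (LINT s:{a..c}|lborel. S (t - s) (h s)) + duhamel_integral S c t h"
    unfolding duhamel_integral_def using assms
    by (intro set_integral_Icc_split set_integrable_duhamel_integrand[OF h])
  also have "(LINT s:{a..c}|lborel. S (t - s) (h s)) = (LINT s:{a..c}|lborel. S (t - c) (S (c - s) (h s)))"
    using assms by (intro set_lebesgue_integral_cong) (auto simp: S_semigroup[symmetric])
  also have "\<dots> = S (t - c) (duhamel_integral S a c h)"
    unfolding duhamel_integral_def using assms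
    by (intro set_integral_bounded_linear(2) bounded_linear_S set_integrable_duhamel_integrand
        set_integrable_subset[OF h]) auto
  finally show ?thesis .
qed

lemma tendsto_S_at_right: "((\<lambda>t. S (t - c) x) \<longlongrightarrow> x) (at_right c)"
  using S_tendsto_at_right_0[of x] unfolding filterlim_at_right_to_0[where a=c] by simp

lemma duhamel_integral_tendsto_0:
  assumes h: "set_integrable lborel {c..b} h" and "0 \<le> c" "c < b" "b \<le> T"
  shows "((\<lambda>t. duhamel_integral S c t h) \<longlongrightarrow> 0) (at_right c)"
proof (rule Lim_null_comparison)
  show "\<forall>\<^sub>F t in at_right c. norm (duhamel_integral S c t h) \<le> M * (LINT s:{c..t}|lborel. norm (h s))"
    unfolding eventually_at_right_field
    using assms by (intro exI[of _ b] conjI allI impI norm_duhamel_integral_le set_integrable_subset[OF h]) auto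
  show "((\<lambda>t. M * (LINT s:{c..t}|lborel. norm (h s))) \<longlongrightarrow> 0) (at_right c)"
    using set_integral_Icc_tendsto_0[OF set_integrable_norm[OF h] \<open>c < b\<close>] by (rule tendsto_mult_right_zero)
qed

lemma duhamel_restart:
  assumes h: "set_integrable lborel {a..b} h" and "0 \<le> a" "a \<le> c" "c < b" "b \<le> T"
    and w: "continuous_on {a..b} w"
    and duhamel: "AE t in lborel. t \<in> {a..b} \<longrightarrow> w t = S (t - a) x + duhamel_integral S a t h"
  shows "AE t in lborel. t \<in> {c..b} \<longrightarrow> w t = S (t - c) (w c) + duhamel_integral S c t h"
proof -
  define v where "v = S (c - a) x + duhamel_integral S a c h"
  have shift: "S (t - a) x + duhamel_integral S a t h = S (t - c) v + duhamel_integral S c t h"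
    if "t \<in> {c..b}" for t
  proof -
    have "S (t - a) x = S (t - c) (S (c - a) x)"
      using S_semigroup[of "t - c" "c - a"] that assms by simp
    moreover have "duhamel_integral S a t h = S (t - c) (duhamel_integral S a c h) + duhamel_integral S c t h"
      using that assms by (intro duhamel_integral_split set_integrable_subset[OF h]) auto
    ultimately show ?thesis
      unfolding v_def using that assms by (simp add: S_add)
  qed
  \<comment> \<open>The formula holds only almost everywhere, so its value at \<open>c\<close> is compared with \<open>w c\<close> via right limits.\<close>
  have "w c = v"
  proof (rule tendsto_at_right_unique_AE)
    have "continuous_on {c..b} w"
      using assms by (intro continuous_on_subset[OF w]) auto
    then show "(w \<longlongrightarrow> w c) (at_right c)"
      using \<open>c < b\<close> unfolding continuous_on_def by (metis at_within_Icc_at_right atLeastAtMost_iff less_imp_le order_refl)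
    have "((\<lambda>t. S (t - c) v + duhamel_integral S c t h) \<longlongrightarrow> v + 0) (at_right c)"
      using assms by (intro tendsto_add tendsto_S_at_right duhamel_integral_tendsto_0 set_integrable_subset[OF h]) auto
    then show "((\<lambda>t. S (t - c) v + duhamel_integral S c t h) \<longlongrightarrow> v) (at_right c)"
      by simp
    show "AE t in lborel. t \<in> {c<..<b} \<longrightarrow> w t = S (t - c) v + duhamel_integral S c t h"
      using duhamel by eventually_elim (use assms shift in auto)
  qed (fact \<open>c < b\<close>)
  show ?thesis
    using duhamel by eventually_elim (use assms shift \<open>w c = v\<close> in auto)
qed

lemma duhamel_diff:
  assumes f: "set_integrable lborel {a..T} f" and g: "set_integrable lborel {a..T} g" and "0 \<le> a"
    and w: "AE t in lborel. t \<in> {a..T} \<longrightarrow> w t = S (t - a) x + duhamel_integral S a t f"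
    and v: "AE t in lborel. t \<in> {a..T} \<longrightarrow> v t = S (t - a) x + duhamel_integral S a t g"
    and k: "\<And>s. s \<in> {a..T} \<Longrightarrow> f s - g s = k s"
  shows "AE t in lborel. t \<in> {a..T} \<longrightarrow> w t - v t = duhamel_integral S a t k"
  using w v
proof eventually_elim
  case (elim t)
  show ?case
  proof
    assume t: "t \<in> {a..T}"
    then have "w t - v t = duhamel_integral S a t (\<lambda>s. f s - g s)"
      using elim assms by (simp add: duhamel_integral_diff set_integrable_subset[OF f] set_integrable_subset[OF g])
    also have "\<dots> = duhamel_integral S a t k"
      unfolding duhamel_integral_def using t k by (intro set_lebesgue_integral_cong) auto
    finally show "w t - v t = duhamel_integral S a t k" .
  qed
qed

section \<open>The homogeneous Volterra equation\<close>

lemma volterra_norm_le: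
  fixes K :: "real \<Rightarrow> real"
  assumes K: "L2_on 0 T K" and d: "continuous_on {a..T} d" and "0 \<le> a" "a \<le> b" "b \<le> T"
    and eq: "AE t in lborel. t \<in> {a..T} \<longrightarrow>
               d t = duhamel_integral S a t (\<lambda>s. LINT \<sigma>:{a..s}|lborel. K (s - \<sigma>) *\<^sub>R d \<sigma>)"
    and vanish: "\<And>t. t \<in> {a..T} \<Longrightarrow> t < a' \<Longrightarrow> d t = 0"
    and bound: "\<And>t. t \<in> {a..b} \<Longrightarrow> norm (d t) \<le> m"
  shows "AE t in lborel. t \<in> {a..b} \<longrightarrow>
           norm (d t) \<le> M * (m * (LINT r:{0..T}|lborel. \<bar>K r\<bar>) * measure lborel {a'..b})"
proof -
  define L where "L = (LINT r:{0..T}|lborel. \<bar>K r\<bar>)"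
  define D where "D s = (LINT \<sigma>:{a..s}|lborel. K (s - \<sigma>) *\<^sub>R d \<sigma>)" for s
  have "0 \<le> L"
    unfolding L_def set_lebesgue_integral_def by (intro integral_nonneg_AE) auto
  have "0 \<le> m"
    using order_trans[OF norm_ge_zero bound[of a]] \<open>a \<le> b\<close> by simp
  have d_L2: "L2_on a T d"
    using d by (rule continuous_on_imp_L2_on)
  have D_bound: "norm (D s) \<le> m * L * indicator {a'..b} s" if s: "s \<in> {a..b}" for s
  proof (cases "s < a'")
    case True
    then have "D s = (LINT \<sigma>:{a..s}|lborel. 0)"
      unfolding D_def using s vanish \<open>b \<le> T\<close> by (intro set_lebesgue_integral_cong) auto
    then show ?thesis
      using True by simp
  next
    case False
    have "norm (D s) \<le> m * L"
      unfolding D_def L_def using s assms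
      by (intro norm_kernel_integral_le[OF K L2_on_subset[OF d_L2]]) auto
    then show ?thesis
      using False s by simp
  qed
  have D_int: "set_integrable lborel {a..T} D"
    using set_integrable_kernel_integral[OF K d_L2 \<open>0 \<le> a\<close> order_refl, of a]
    by (rule set_integrable_cong[THEN iffD1, rotated -1]) (auto simp: D_def)
  show ?thesis
    using eq
  proof eventually_elim
    case (elim t)
    show ?case
    proof
      assume t: "t \<in> {a..b}"
      have Dt: "set_integrable lborel {a..t} D"
        using t \<open>b \<le> T\<close> by (intro set_integrable_subset[OF D_int]) auto
      have "norm (d t) \<le> M * (LINT s:{a..t}|lborel. norm (D s))"
        using elim t \<open>b \<le> T\<close> norm_duhamel_integral_le[OF Dt \<open>0 \<le> a\<close>] by (simp add: D_def[abs_def])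
      also have "(LINT s:{a..t}|lborel. norm (D s)) \<le> m * L * measure lborel {a'..b}"
        using D_bound t \<open>0 \<le> L\<close> \<open>0 \<le> m\<close> by (intro set_integral_le_indicator_bound set_integrable_norm[OF Dt]) auto
      finally show "norm (d t) \<le> M * (m * (LINT r:{0..T}|lborel. \<bar>K r\<bar>) * measure lborel {a'..b})"
        using M_nonneg unfolding L_def by (simp add: mult_left_mono)
    qed
  qed
qed

lemma volterra_vanishing_extends:
  fixes K :: "real \<Rightarrow> real"
  assumes K: "L2_on 0 T K" and d: "continuous_on {a..T} d" and "0 \<le> a" "a < T"
    and eq: "AE t in lborel. t \<in> {a..T} \<longrightarrow>
               d t = duhamel_integral S a t (\<lambda>s. LINT \<sigma>:{a..s}|lborel. K (s - \<sigma>) *\<^sub>R d \<sigma>)"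
    and vanish: "\<And>t. t \<in> {a..T} \<Longrightarrow> t < a' \<Longrightarrow> d t = 0" and "a \<le> a'"
    and "0 < h" and small: "M * (LINT r:{0..T}|lborel. \<bar>K r\<bar>) * h \<le> 1/2"
    and t: "t \<in> {a..min T (a' + h)}"
  shows "d t = 0"
proof -
  define L where "L = (LINT r:{0..T}|lborel. \<bar>K r\<bar>)"
  have "0 \<le> L"
    unfolding L_def set_lebesgue_integral_def by (intro integral_nonneg_AE) auto
  define b where "b = min T (a' + h)"
  have "a < b" "b \<le> T"
    using assms unfolding b_def by auto
  have norm_d: "continuous_on {a..b} (\<lambda>t. norm (d t))"
    using \<open>b \<le> T\<close> by (intro continuous_on_norm continuous_on_subset[OF d]) auto
  then obtain tm where "tm \<in> {a..b}" and max: "\<And>t. t \<in> {a..b} \<Longrightarrow> norm (d t) \<le> norm (d tm)"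
    using continuous_attains_sup[OF compact_Icc] \<open>a < b\<close> by (metis atLeastAtMost_iff empty_iff less_imp_le order_refl)
  define m where "m = norm (d tm)"
  have "0 \<le> m"
    unfolding m_def by simp
  have "AE t in lborel. t \<in> {a..b} \<longrightarrow> norm (d t) \<le> M * (m * L * measure lborel {a'..b})"
    unfolding m_def L_def using \<open>a < b\<close> \<open>b \<le> T\<close> max
    by (intro volterra_norm_le[OF K d \<open>0 \<le> a\<close> _ _ eq vanish]) auto
  with norm_d \<open>a < b\<close> have "norm (d tm) \<le> M * (m * L * measure lborel {a'..b})"
    using \<open>tm \<in> {a..b}\<close> by (rule continuous_on_le_if_AE_le)
  then have "m \<le> M * (m * L * measure lborel {a'..b})"
    by (simp only: m_def)
  also have "\<dots> \<le> M * (m * L * h)"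
    using M_nonneg \<open>0 \<le> m\<close> \<open>0 \<le> L\<close> \<open>0 < h\<close>
    by (intro mult_left_mono) (auto simp: b_def measure_lborel_Icc)
  also have "\<dots> = (M * L * h) * m"
    by (simp add: algebra_simps)
  also have "\<dots> \<le> (1/2) * m"
    using small \<open>0 \<le> m\<close> unfolding L_def by (intro mult_right_mono) auto
  finally have "m = 0"
    using \<open>0 \<le> m\<close> by simp
  then show ?thesis
    using max[of t] t unfolding m_def b_def by simp
qed

lemma volterra_unique:
  fixes K :: "real \<Rightarrow> real"
  assumes K: "L2_on 0 T K" and d: "continuous_on {a..T} d" and "0 \<le> a" "a < T"
    and eq: "AE t in lborel. t \<in> {a..T} \<longrightarrow>
               d t = duhamel_integral S a t (\<lambda>s. LINT \<sigma>:{a..s}|lborel. K (s - \<sigma>) *\<^sub>R d \<sigma>)"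
    and t: "t \<in> {a..T}"
  shows "d t = 0"
proof -
  define L where "L = (LINT r:{0..T}|lborel. \<bar>K r\<bar>)"
  have "0 \<le> L"
    unfolding L_def set_lebesgue_integral_def by (intro integral_nonneg_AE) auto
  define h where "h = 1 / (2 * (M * L + 1))"
  have "0 < h"
    using mult_nonneg_nonneg[OF M_nonneg \<open>0 \<le> L\<close>] unfolding h_def by simp
  have "M * L * h = (M * L) / (2 * (M * L + 1))"
    unfolding h_def by simp
  also have "\<dots> \<le> (M * L + 1) / (2 * (M * L + 1))"
    using mult_nonneg_nonneg[OF M_nonneg \<open>0 \<le> L\<close>] by (intro divide_right_mono) auto
  also have "\<dots> = 1/2"
    using mult_nonneg_nonneg[OF M_nonneg \<open>0 \<le> L\<close>] by simp
  finally have "M * L * h \<le> 1/2" .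
  have "\<forall>t\<in>{a..T}. t < a + real n * h \<longrightarrow> d t = 0" for n
  proof (induction n)
    case (Suc n)
    have "d t = 0" if "t \<in> {a..T}" "t < a + real (Suc n) * h" for t
      using volterra_vanishing_extends[OF K d \<open>0 \<le> a\<close> \<open>a < T\<close> eq _ _ \<open>0 < h\<close>, of "a + real n * h" t]
        Suc.IH that \<open>0 < h\<close> \<open>M * L * h \<le> 1/2\<close> unfolding L_def by (auto simp: algebra_simps)
    then show ?case
      by blast
  qed simp
  moreover obtain n where "t < a + real n * h"
    using ex_less_of_nat_mult[OF \<open>0 < h\<close>, of "t - a"] by (auto simp: algebra_simps)
  ultimately show ?thesis
    using t by blast
qed

end

section \<open>Restarting a mild solution\<close>

definition mild_forcing ::
  "(real \<Rightarrow> real) \<Rightarrow> ('u \<Rightarrow> 'h) \<Rightarrow> real \<Rightarrow> (real \<Rightarrow> 'h) \<Rightarrow> (real \<Rightarrow> 'u) \<Rightarrow> (real \<Rightarrow> 'h) \<Rightarrow> real \<Rightarrow>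
    'h::{banach, second_countable_topology}"
  where "mild_forcing K B \<tau> \<xi> u w s =
    (LINT \<sigma>:{\<tau>..s}|lborel. K (s - \<sigma>) *\<^sub>R w \<sigma>) + (LINT \<sigma>:{0..\<tau>}|lborel. K (s - \<sigma>) *\<^sub>R \<xi> \<sigma>) + B (u s)"

lemma mild_solution_duhamel:
  fixes S :: "real \<Rightarrow> 'h::{real_inner, banach, second_countable_topology} \<Rightarrow> 'h"
    and B :: "'u::{banach, second_countable_topology} \<Rightarrow> 'h"
  assumes S: "bounded_semigroup S T M" and K: "L2_on 0 T K" and B: "bounded_linear B"
    and u: "L2_on \<tau> T u" and \<xi>: "L2_on 0 \<tau> \<xi>" and "0 \<le> \<tau>"
    and w: "mild_solution S K B T \<tau> x \<xi> u w"
  shows "set_integrable lborel {\<tau>..T} (mild_forcing K B \<tau> \<xi> u w)"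
    and "AE t in lborel. t \<in> {\<tau>..T} \<longrightarrow> w t = S (t - \<tau>) x + duhamel_integral S \<tau> t (mild_forcing K B \<tau> \<xi> u w)"
proof -
  interpret bounded_semigroup S T M
    by (fact S)
  have "continuous_on {\<tau>..T} w"
    using w unfolding mild_solution_def by simp
  have memory: "set_integrable lborel {\<tau>..T} (\<lambda>s. LINT \<sigma>:{\<tau>..s}|lborel. K (s - \<sigma>) *\<^sub>R w \<sigma>)"
    using set_integrable_kernel_integral[OF K continuous_on_imp_L2_on[OF \<open>continuous_on {\<tau>..T} w\<close>] \<open>0 \<le> \<tau>\<close> order_refl, of \<tau>]
    by (rule set_integrable_cong[THEN iffD1, rotated -1]) auto
  have history: "set_integrable lborel {\<tau>..T} (\<lambda>s. LINT \<sigma>:{0..\<tau>}|lborel. K (s - \<sigma>) *\<^sub>R \<xi> \<sigma>)"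
    using set_integrable_kernel_integral[OF K \<xi> order_refl order_refl, of \<tau>]
    by (rule set_integrable_cong[THEN iffD1, rotated -1]) (auto simp: min_def)
  have control: "set_integrable lborel {\<tau>..T} (\<lambda>s. B (u s))"
    by (rule set_integral_bounded_linear(1)[OF B L2_on_imp_set_integrable[OF u]])
  show forcing: "set_integrable lborel {\<tau>..T} (mild_forcing K B \<tau> \<xi> u w)"
    unfolding mild_forcing_def[abs_def] by (intro set_integral_add(1) memory history control)
  have "duhamel_integral S \<tau> t (mild_forcing K B \<tau> \<xi> u w) =
      duhamel_integral S \<tau> t (\<lambda>s. LINT \<sigma>:{\<tau>..s}|lborel. K (s - \<sigma>) *\<^sub>R w \<sigma>)
      + duhamel_integral S \<tau> t (\<lambda>s. LINT \<sigma>:{0..\<tau>}|lborel. K (s - \<sigma>) *\<^sub>R \<xi> \<sigma>)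
      + duhamel_integral S \<tau> t (\<lambda>s. B (u s))" if "t \<in> {\<tau>..T}" for t
    using that \<open>0 \<le> \<tau>\<close> unfolding mild_forcing_def[abs_def]
    by (simp add: duhamel_integral_add set_integral_add(1) set_integrable_subset[OF memory]
        set_integrable_subset[OF history] set_integrable_subset[OF control])
  then show "AE t in lborel. t \<in> {\<tau>..T} \<longrightarrow> w t = S (t - \<tau>) x + duhamel_integral S \<tau> t (mild_forcing K B \<tau> \<xi> u w)"
    using w unfolding mild_solution_def duhamel_integral_def by (auto simp: add.assoc elim!: eventually_mono)
qed

lemma mild_forcing_restart:
  fixes K :: "real \<Rightarrow> real" and \<xi> w0 w1 :: "real \<Rightarrow> 'h::{banach, second_countable_topology}"
  assumes K: "L2_on 0 T K" and \<xi>: "L2_on 0 \<tau> \<xi>" and w0: "L2_on \<tau> T w0" and w1: "L2_on \<tau>1 T w1"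
    and "0 \<le> \<tau>" "\<tau> \<le> \<tau>1" and s: "s \<in> {\<tau>1..T}"
  shows "mild_forcing K B \<tau> \<xi> u w0 s - mild_forcing K B \<tau>1 (\<lambda>\<sigma>. if \<sigma> \<le> \<tau> then \<xi> \<sigma> else w0 \<sigma>) u w1 s
       = (LINT \<sigma>:{\<tau>1..s}|lborel. K (s - \<sigma>) *\<^sub>R (w0 \<sigma> - w1 \<sigma>))"
proof -
  let ?y = "\<lambda>\<sigma>. if \<sigma> \<le> \<tau> then \<xi> \<sigma> else w0 \<sigma>"
  have y: "L2_on 0 \<tau>1 ?y"
    using assms by (intro L2_on_glue[OF \<xi> L2_on_subset[OF w0]]) auto
  have i0: "set_integrable lborel {\<tau>..s} (\<lambda>\<sigma>. K (s - \<sigma>) *\<^sub>R w0 \<sigma>)"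
    using assms by (intro set_integral_kernel_mult(1)[OF K w0]) auto
  have i1: "set_integrable lborel {\<tau>1..s} (\<lambda>\<sigma>. K (s - \<sigma>) *\<^sub>R w1 \<sigma>)"
    using assms by (intro set_integral_kernel_mult(1)[OF K w1]) auto
  have iy: "set_integrable lborel {0..\<tau>1} (\<lambda>\<sigma>. K (s - \<sigma>) *\<^sub>R ?y \<sigma>)"
    using assms by (intro set_integral_kernel_mult(1)[OF K y]) auto
  have memory: "(LINT \<sigma>:{\<tau>..s}|lborel. K (s - \<sigma>) *\<^sub>R w0 \<sigma>) =
      (LINT \<sigma>:{\<tau>..\<tau>1}|lborel. K (s - \<sigma>) *\<^sub>R w0 \<sigma>) + (LINT \<sigma>:{\<tau>1..s}|lborel. K (s - \<sigma>) *\<^sub>R w0 \<sigma>)"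
    using assms by (intro set_integral_Icc_split[OF i0]) auto
  have "(LINT \<sigma>:{0..\<tau>1}|lborel. K (s - \<sigma>) *\<^sub>R ?y \<sigma>) =
      (LINT \<sigma>:{0..\<tau>}|lborel. K (s - \<sigma>) *\<^sub>R ?y \<sigma>) + (LINT \<sigma>:{\<tau>..\<tau>1}|lborel. K (s - \<sigma>) *\<^sub>R ?y \<sigma>)"
    using assms by (intro set_integral_Icc_split[OF iy]) auto
  also have "(LINT \<sigma>:{0..\<tau>}|lborel. K (s - \<sigma>) *\<^sub>R ?y \<sigma>) = (LINT \<sigma>:{0..\<tau>}|lborel. K (s - \<sigma>) *\<^sub>R \<xi> \<sigma>)"
    by (intro set_lebesgue_integral_cong) auto
  also have "(LINT \<sigma>:{\<tau>..\<tau>1}|lborel. K (s - \<sigma>) *\<^sub>R ?y \<sigma>) = (LINT \<sigma>:{\<tau>..\<tau>1}|lborel. K (s - \<sigma>) *\<^sub>R w0 \<sigma>)"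
    using assms by (intro set_integral_Icc_cong set_integrable_subset[OF iy] set_integrable_subset[OF i0]) auto
  finally have history: "(LINT \<sigma>:{0..\<tau>1}|lborel. K (s - \<sigma>) *\<^sub>R ?y \<sigma>) =
      (LINT \<sigma>:{0..\<tau>}|lborel. K (s - \<sigma>) *\<^sub>R \<xi> \<sigma>) + (LINT \<sigma>:{\<tau>..\<tau>1}|lborel. K (s - \<sigma>) *\<^sub>R w0 \<sigma>)" .
  have "(LINT \<sigma>:{\<tau>1..s}|lborel. K (s - \<sigma>) *\<^sub>R (w0 \<sigma> - w1 \<sigma>)) =
      (LINT \<sigma>:{\<tau>1..s}|lborel. K (s - \<sigma>) *\<^sub>R w0 \<sigma>) - (LINT \<sigma>:{\<tau>1..s}|lborel. K (s - \<sigma>) *\<^sub>R w1 \<sigma>)"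
    using assms set_integral_diff(2)[OF set_integrable_subset[OF i0] i1] by (simp add: scaleR_diff_right)
  then show ?thesis
    unfolding mild_forcing_def memory history by (simp add: algebra_simps)
qed

theorem proposition3p1:
  fixes S :: "real \<Rightarrow> 'h::{real_inner, banach, second_countable_topology} \<Rightarrow> 'h"
    and B :: "'u::{real_inner, banach, second_countable_topology} \<Rightarrow> 'h"
    and K :: "real \<Rightarrow> real"
    and T C \<omega> \<tau> \<tau>1 :: real
    and \<xi>0 :: 'h and \<xi> w0 w1 :: "real \<Rightarrow> 'h" and u :: "real \<Rightarrow> 'u"
  assumes "T > 0"
    and "c0_semigroup S C \<omega>"
    and "L2_on 0 T K"
    and "bounded_linear B"
    and "\<tau> \<in> {0<..<T}"
    and "L2_on 0 \<tau> \<xi>"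
    and "L2_on \<tau> T u"
    and "mild_solution S K B T \<tau> \<xi>0 \<xi> u w0"
    and "\<tau>1 \<in> {\<tau><..<T}"
    and "mild_solution S K B T \<tau>1 (w0 \<tau>1) (\<lambda>s. if s \<le> \<tau> then \<xi> s else w0 s) u w1"
  shows "\<forall>t \<in> {\<tau>1<..<T}. w0 t = w1 t"
proof -
  have \<tau>: "0 < \<tau>" "\<tau> < \<tau>1" "\<tau>1 < T"
    using assms(5,9) by auto
  define M where "M = \<bar>C\<bar> * exp (\<bar>\<omega>\<bar> * T)"
  have S: "bounded_semigroup S T M"
    unfolding M_def using assms(1,2) by (intro bounded_semigroup_if_c0_semigroup) auto
  interpret bounded_semigroup S T M
    by (fact S)
  have w0: "continuous_on {\<tau>..T} w0" and w1: "continuous_on {\<tau>1..T} w1"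
    using assms(8,10) unfolding mild_solution_def by auto
  have history1: "L2_on 0 \<tau>1 (\<lambda>s. if s \<le> \<tau> then \<xi> s else w0 s)"
    using \<tau> by (intro L2_on_glue assms(6) continuous_on_imp_L2_on continuous_on_subset[OF w0]) auto
  note duhamel0 = mild_solution_duhamel[OF S assms(3,4,7,6) _ assms(8)]
    and duhamel1 = mild_solution_duhamel[OF S assms(3,4) L2_on_subset[OF assms(7)] history1 _ assms(10)]
  have "AE t in lborel. t \<in> {\<tau>1..T} \<longrightarrow>
      w0 t = S (t - \<tau>1) (w0 \<tau>1) + duhamel_integral S \<tau>1 t (mild_forcing K B \<tau> \<xi> u w0)"
    using \<tau> by (intro duhamel_restart[OF duhamel0(1) _ _ _ _ w0 duhamel0(2)]) auto
  then have "AE t in lborel. t \<in> {\<tau>1..T} \<longrightarrow>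
      w0 t - w1 t = duhamel_integral S \<tau>1 t (\<lambda>s. LINT \<sigma>:{\<tau>1..s}|lborel. K (s - \<sigma>) *\<^sub>R (w0 \<sigma> - w1 \<sigma>))"
    using \<tau> by (intro duhamel_diff[OF set_integrable_subset[OF duhamel0(1)] duhamel1(1) _ _ duhamel1(2)]
        mild_forcing_restart[OF assms(3,6)] continuous_on_imp_L2_on w0 w1) auto
  then have "w0 t - w1 t = 0" if "t \<in> {\<tau>1..T}" for t
    using \<tau> that by (intro volterra_unique[OF assms(3)] continuous_on_diff continuous_on_subset[OF w0])
      (use w1 in auto)
  then show ?thesis
    by auto
qed

end
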